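(* Let $n\ge0$ be an integer with $\chi_n>c^2$, and let $x_1$ be the minimal root of $\psi_n$ in $(1,\infty)$. Then $$x_1-\frac{\sqrt{\chi_n}}{c}>\frac{\pi}{2c}\qquad\text{and}\qquad\sqrt{\frac{x_1^2-1}{x_1^2-\chi_n/c^2}}<\frac{2}{\pi}\,c\Big(x_1-\frac{\sqrt{\chi_n}}{c}\Big).$$
   Context: For a real number $c>0$, let $\psi_0,\psi_1,\dots$ be the prolate spheroidal wave functions of band limit $c$: the real $L^2[-1,1]$-normalized eigenfunctions of $F_c[\varphi](x)=\int_{-1}^1\varphi(t)e^{icxt}\,dt$ with eigenvalues $\lambda_n$ ordered by $|\lambda_n|\ge|\lambda_{n+1}|$, extended to entire functions by $\lambda_n\psi_n(x)=\int_{-1}^1\psi_n(t)e^{icxt}\,dt$. $\chi_0<\chi_1<\dots$ are the positive numbers such that $\psi_n$ satisfies $(1-x^2)\psi''(x)-2x\psi'(x)+(\chi_n-c^2x^2)\psi(x)=0$ for all $x$. (Each $\psi_n$ has infinitely many roots in $(1,\infty)$.) *)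

theory Defs
  imports "HOL-Analysis.Analysis"
begin

text \<open>The prolate spheroidal wave functions of band limit c, as a sequence
  psi n (restricted to the real line), eigenvalues lam n of the integral
  operator F_c, and the Sturm-Liouville parameters chi n.\<close>

definition pswf_system ::
  "real \<Rightarrow> (nat \<Rightarrow> real \<Rightarrow> real) \<Rightarrow> (nat \<Rightarrow> complex) \<Rightarrow> (nat \<Rightarrow> real) \<Rightarrow> bool" where
  "pswf_system c psi lam chi \<longleftrightarrow>
     (\<forall>n. ((\<lambda>t. (psi n t)\<^sup>2) has_integral 1) {-1..1}) \<and>
     (\<forall>n m. n \<noteq> m \<longrightarrow> ((\<lambda>t. psi n t * psi m t) has_integral 0) {-1..1}) \<and>
     (\<forall>n x. ((\<lambda>t. complex_of_real (psi n t) * exp (\<i> * complex_of_real (c * x * t)))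
              has_integral (lam n * complex_of_real (psi n x))) {-1..1}) \<and>
     (\<forall>n. lam n \<noteq> 0) \<and>
     (\<forall>n. norm (lam (Suc n)) \<le> norm (lam n)) \<and>
     (\<forall>n. 0 < chi n \<and> chi n < chi (Suc n)) \<and>
     (\<forall>n x. psi n differentiable (at x) \<and> deriv (psi n) differentiable (at x)) \<and>
     (\<forall>n x. (1 - x\<^sup>2) * deriv (deriv (psi n)) x - 2 * x * deriv (psi n) x
              + (chi n - c\<^sup>2 * x\<^sup>2) * psi n x = 0)"

end

theory Submission
  imports Defs
begin

text \<open>Normalise \<open>\<psi>\<^sub>n\<close> to be positive on \<open>(1, x\<^sub>1)\<close> and put \<open>x\<^sub>0 = \<surd>\<chi>\<^sub>n / c\<close>, the
  turning point of the equation. The flux \<open>(x\<^sup>2 - 1) \<psi>'\<close> has derivative \<open>(\<chi>\<^sub>n - c\<^sup>2x\<^sup>2) \<psi>\<close>, so it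
  grows from \<open>0\<close> on \<open>(1, x\<^sub>0)\<close> and falls beyond \<open>x\<^sub>0\<close>; hence \<open>x\<^sub>0 < x\<^sub>1\<close>, and \<open>\<psi>'\<close> has a last zero
  \<open>m \<in> (x\<^sub>0, x\<^sub>1)\<close> after which \<open>\<psi>' < 0\<close>. On \<open>(m, x\<^sub>1)\<close> the equation makes \<open>\<psi>\<close> a strict
  supersolution of \<open>u'' + F\<^sup>2 u = 0\<close> with \<open>F = c \<surd>((x\<^sub>1\<^sup>2 - x\<^sub>0\<^sup>2) / (x\<^sub>1\<^sup>2 - 1)) < c\<close>, and Sturm
  comparison with \<open>cos (F (x - m))\<close> forces \<open>F (x\<^sub>1 - m) > \<pi>/2\<close>. Both inequalities are
  rearrangements of \<open>F (x\<^sub>1 - x\<^sub>0) > \<pi>/2\<close>.\<close>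

lemma continuous_on_connected_nonzero_sign:
  fixes f :: "real \<Rightarrow> real"
  assumes "continuous_on S f" "connected S" "\<And>x. x \<in> S \<Longrightarrow> f x \<noteq> 0"
  obtains s :: real where "\<And>x. x \<in> S \<Longrightarrow> 0 < s * f x"
proof -
  have "(\<forall>x\<in>S. f x > 0) \<or> (\<forall>x\<in>S. f x < 0)"
  proof (rule ccontr)
    assume "\<not> ?thesis"
    then obtain x y where "x \<in> S" "y \<in> S" "f x < 0" "f y > 0"
      using assms(3) by (meson linorder_neqE_linordered_idom)
    then have "0 \<in> f ` S"
      using connectedD_interval[OF connected_continuous_image[OF assms(1,2)], of "f x" "f y" 0]
      by auto
    then show False
      using assms(3) by auto
  qed
  then show thesis
  proof
    assume "\<forall>x\<in>S. f x > 0"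
    then show thesis
      by (intro that[of 1]) simp
  next
    assume "\<forall>x\<in>S. f x < 0"
    then show thesis
      by (intro that[of "-1"]) simp
  qed
qed

lemma power2_minus_one_pos: "1 < x \<Longrightarrow> 0 < x\<^sup>2 - (1 :: real)"
  using one_less_power[of x 2] by simp

lemma cosine_comparison_gap:
  fixes h h' h'' :: "real \<Rightarrow> real" and F a b :: real
  assumes F: "F > 0" and ab: "a < b"
    and d1: "\<And>x. (h has_real_derivative h' x) (at x)"
    and d2: "\<And>x. (h' has_real_derivative h'' x) (at x)"
    and start: "h' a = 0" and stop: "h b = 0" "h' b \<le> 0"
    and super: "\<And>x. a < x \<Longrightarrow> x < b \<Longrightarrow> h'' x + F\<^sup>2 * h x > 0"
  shows "pi / 2 < F * (b - a)"
proof (rule ccontr)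
  assume "\<not> pi / 2 < F * (b - a)"
  then have short: "F * (b - a) \<le> pi / 2"
    by simp
  txt \<open>The Wronskian of \<open>h\<close> and \<open>cos (F (x - a))\<close>.\<close>
  define w where "w x = h' x * cos (F * (x - a)) + F * h x * sin (F * (x - a))" for x
  have dw: "(w has_real_derivative (h'' x + F\<^sup>2 * h x) * cos (F * (x - a))) (at x)" for x
  proof -
    have "(w has_real_derivative h'' x * cos (F * (x - a)) + h' x * (- sin (F * (x - a)) * (F * 1))
           + (F * h' x * sin (F * (x - a)) + F * h x * (cos (F * (x - a)) * (F * 1)))) (at x)"
      unfolding w_def[abs_def] by (auto intro!: derivative_eq_intros d1 d2)
    then show ?thesis
      by (simp add: algebra_simps power2_eq_square)
  qed
  obtain z where z: "a < z" "z < b"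
    and mvt: "w b - w a = (b - a) * ((h'' z + F\<^sup>2 * h z) * cos (F * (z - a)))"
    using MVT2[of a b w "\<lambda>x. (h'' x + F\<^sup>2 * h x) * cos (F * (x - a))"] dw ab by auto
  have "cos (F * (z - a)) > 0"
  proof (rule cos_gt_zero_pi)
    have "0 < F * (z - a)"
      using F z by simp
    then show "- (pi / 2) < F * (z - a)"
      using pi_gt_zero by linarith
    have "F * (z - a) < F * (b - a)"
      using F z by simp
    then show "F * (z - a) < pi / 2"
      using short by simp
  qed
  then have "0 < (b - a) * ((h'' z + F\<^sup>2 * h z) * cos (F * (z - a)))"
    using super[OF z] ab by simp
  then have "w a < w b"
    using mvt by simp
  moreover have "w a = 0"
    using start by (simp add: w_def)
  moreover have "0 < F * (b - a)"
    using F ab by simp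
  then have "cos (F * (b - a)) \<ge> 0"
    using short pi_gt_zero by (intro cos_ge_zero) linarith+
  then have "w b \<le> 0"
    using stop by (simp add: w_def mult_nonpos_nonneg)
  ultimately show False
    by simp
qed

locale spheroidal_arc =
  fixes c chi x1 :: real and h h' h'' :: "real \<Rightarrow> real"
  assumes c_pos: "c > 0" and chi_gt: "c\<^sup>2 < chi" and x1_gt: "1 < x1"
    and root: "h x1 = 0"
    and pos: "\<And>y. 1 < y \<Longrightarrow> y < x1 \<Longrightarrow> h y > 0"
    and d1: "\<And>x. (h has_real_derivative h' x) (at x)"
    and d2: "\<And>x. (h' has_real_derivative h'' x) (at x)"
    and ode: "\<And>x. (1 - x\<^sup>2) * h'' x - 2 * x * h' x + (chi - c\<^sup>2 * x\<^sup>2) * h x = 0"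
begin

definition turning_point :: real where
  "turning_point = sqrt chi / c"

definition flux :: "real \<Rightarrow> real" where
  "flux x = (x\<^sup>2 - 1) * h' x"

definition comparison_freq :: real where
  "comparison_freq = c * sqrt ((x1\<^sup>2 - turning_point\<^sup>2) / (x1\<^sup>2 - 1))"

lemma turning_point_sq: "turning_point\<^sup>2 = chi / c\<^sup>2"
proof -
  have "0 < chi"
    using chi_gt zero_le_power2[of c] by linarith
  then show ?thesis
    by (simp add: turning_point_def power_divide)
qed

lemma turning_point_gt_1: "1 < turning_point"
proof -
  have "sqrt (c\<^sup>2) < sqrt chi"
    using chi_gt by (simp only: real_sqrt_less_iff)
  then show ?thesis
    using c_pos by (simp add: turning_point_def)
qed

lemma flux_deriv: "(flux has_real_derivative (chi - c\<^sup>2 * x\<^sup>2) * h x) (at x)"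
proof -
  have "(flux has_real_derivative 2 * x * h' x + (x\<^sup>2 - 1) * h'' x) (at x)"
    unfolding flux_def[abs_def] by (auto intro!: derivative_eq_intros d2)
  moreover have "2 * x * h' x + (x\<^sup>2 - 1) * h'' x = (chi - c\<^sup>2 * x\<^sup>2) * h x"
    using ode[of x] by (simp add: algebra_simps)
  ultimately show ?thesis
    by simp
qed

lemma continuous_on_flux: "continuous_on S flux"
  using flux_deriv by (meson DERIV_isCont continuous_at_imp_continuous_on)

lemma flux_pos:
  assumes "1 < x" "x \<le> x1" "x \<le> turning_point"
  shows "0 < flux x"
proof -
  have "flux 1 < flux x"
  proof (rule DERIV_pos_imp_increasing_open[OF \<open>1 < x\<close> _ continuous_on_flux])
    fix z assume z: "1 < z" "z < x"
    have "z\<^sup>2 < turning_point\<^sup>2"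
      using z assms by (simp add: power_strict_mono)
    then have "c\<^sup>2 * z\<^sup>2 < chi"
      using c_pos by (simp add: turning_point_sq field_simps)
    moreover have "0 < h z"
      using pos[of z] z assms by simp
    ultimately have "0 < (chi - c\<^sup>2 * z\<^sup>2) * h z"
      by simp
    then show "\<exists>y. (flux has_real_derivative y) (at z) \<and> 0 < y"
      using flux_deriv by blast
  qed
  then show ?thesis
    by (simp add: flux_def)
qed

lemma turning_point_less_root: "turning_point < x1"
proof (rule ccontr)
  assume "\<not> turning_point < x1"
  then have "x1 \<le> turning_point"
    by simp
  define y where "y = (1 + x1) / 2"
  have y: "1 < y" "y < x1"
    using x1_gt by (auto simp: y_def)
  obtain z where z: "y < z" "z < x1" and mvt: "h x1 - h y = (x1 - y) * h' z"
    using MVT2[of y x1 h h'] d1 y by auto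
  have "0 < flux z"
    using flux_pos[of z] z y \<open>x1 \<le> turning_point\<close> by simp
  moreover have "0 < z\<^sup>2 - 1"
    using power2_minus_one_pos[of z] z y by simp
  ultimately have "h' z > 0"
    by (simp add: flux_def zero_less_mult_iff)
  then have "0 < (x1 - y) * h' z"
    using z by simp
  then show False
    using mvt root pos[OF y] by simp
qed

lemma flux_strict_antimono:
  assumes "turning_point \<le> a" "a < b" "b \<le> x1"
  shows "flux b < flux a"
proof (rule DERIV_neg_imp_decreasing_open[OF \<open>a < b\<close> _ continuous_on_flux])
  fix z assume z: "a < z" "z < b"
  have "turning_point\<^sup>2 < z\<^sup>2"
    using z assms turning_point_gt_1 by (simp add: power_strict_mono)
  then have "chi < c\<^sup>2 * z\<^sup>2"
    using c_pos by (simp add: turning_point_sq field_simps)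
  moreover have "h z > 0"
    using pos z assms turning_point_gt_1 by simp
  ultimately have "(chi - c\<^sup>2 * z\<^sup>2) * h z < 0"
    by (simp add: mult_neg_pos)
  then show "\<exists>y. (flux has_real_derivative y) (at z) \<and> y < 0"
    using flux_deriv by blast
qed

lemma last_critical_point:
  obtains m where "turning_point < m" "m < x1" "h' m = 0" "\<And>x. m < x \<Longrightarrow> x \<le> x1 \<Longrightarrow> h' x < 0"
proof -
  obtain \<xi> where \<xi>: "turning_point < \<xi>" "\<xi> < x1"
    and mvt: "h x1 - h turning_point = (x1 - turning_point) * h' \<xi>"
    using MVT2[of turning_point x1 h h'] d1 turning_point_less_root by auto
  have "h turning_point > 0"
    using pos turning_point_gt_1 turning_point_less_root by simp
  then have "(x1 - turning_point) * h' \<xi> < 0"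
    using mvt root by simp
  then have "h' \<xi> < 0"
    using turning_point_less_root by (simp add: mult_less_0_iff)
  then have flux_\<xi>: "flux \<xi> < 0"
    using power2_minus_one_pos[of \<xi>] \<xi> turning_point_gt_1 by (simp add: flux_def mult_pos_neg)
  have flux_tp: "flux turning_point > 0"
    using flux_pos turning_point_gt_1 turning_point_less_root by simp
  obtain m where m: "turning_point \<le> m" "m \<le> \<xi>" "flux m = 0"
    using IVT2'[of flux \<xi> 0 turning_point] flux_\<xi> flux_tp \<xi> continuous_on_flux by auto
  have "m \<noteq> turning_point"
    using m flux_tp by auto
  with m have m_gt: "turning_point < m"
    by simp
  have m_gt_1: "1 < m"
    using m_gt turning_point_gt_1 by simp
  show thesis
  proof
    show "turning_point < m" "m < x1"
      using m_gt m \<xi> by simp_all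
    show "h' m = 0"
      using m power2_minus_one_pos[OF m_gt_1] by (simp add: flux_def)
    fix x assume x: "m < x" "x \<le> x1"
    have "flux x < 0"
      using flux_strict_antimono[of m x] x m m_gt by simp
    moreover have "0 < x\<^sup>2 - 1"
      using power2_minus_one_pos[of x] x m_gt_1 by simp
    ultimately show "h' x < 0"
      by (simp add: flux_def mult_less_0_iff)
  qed
qed

lemma comparison_freq_sq:
  "comparison_freq\<^sup>2 = c\<^sup>2 * ((x1\<^sup>2 - turning_point\<^sup>2) / (x1\<^sup>2 - 1))"
  and comparison_freq_pos: "0 < comparison_freq"
  and comparison_freq_less: "comparison_freq < c"
proof -
  have x1_sq: "1 < x1\<^sup>2"
    using power2_minus_one_pos[OF x1_gt] by simp
  have "1 < turning_point\<^sup>2" "turning_point\<^sup>2 < x1\<^sup>2"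
    using power2_minus_one_pos[OF turning_point_gt_1] turning_point_gt_1 turning_point_less_root
    by (simp_all add: power_strict_mono)
  then have r: "0 < (x1\<^sup>2 - turning_point\<^sup>2) / (x1\<^sup>2 - 1)" "(x1\<^sup>2 - turning_point\<^sup>2) / (x1\<^sup>2 - 1) < 1"
    using x1_sq by simp_all
  then show "comparison_freq\<^sup>2 = c\<^sup>2 * ((x1\<^sup>2 - turning_point\<^sup>2) / (x1\<^sup>2 - 1))"
    by (simp add: comparison_freq_def power_mult_distrib)
  show "0 < comparison_freq"
    using r c_pos by (simp add: comparison_freq_def)
  show "comparison_freq < c"
    using r c_pos by (simp add: comparison_freq_def)
qed

lemma comparison_supersolution:
  assumes x: "1 < x" "x < x1" and "h' x \<le> 0"
  shows "h'' x + comparison_freq\<^sup>2 * h x > 0"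
proof -
  have "x\<^sup>2 < x1\<^sup>2"
    using x by (simp add: power_strict_mono)
  then have "0 < (turning_point\<^sup>2 - 1) * (x1\<^sup>2 - x\<^sup>2) / (x1\<^sup>2 - 1)"
    using power2_minus_one_pos[OF turning_point_gt_1] power2_minus_one_pos[OF x1_gt] by simp
  also have "\<dots> = (x1\<^sup>2 - turning_point\<^sup>2) / (x1\<^sup>2 - 1) * (x\<^sup>2 - 1) - (x\<^sup>2 - turning_point\<^sup>2)"
    using power2_minus_one_pos[OF x1_gt] by (simp add: field_simps)
  finally have "0 < c\<^sup>2 * ((x1\<^sup>2 - turning_point\<^sup>2) / (x1\<^sup>2 - 1) * (x\<^sup>2 - 1) - (x\<^sup>2 - turning_point\<^sup>2))"
    using c_pos by simp
  also have "\<dots> = comparison_freq\<^sup>2 * (x\<^sup>2 - 1) - c\<^sup>2 * x\<^sup>2 + c\<^sup>2 * turning_point\<^sup>2"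
    by (simp add: comparison_freq_sq algebra_simps)
  also have "c\<^sup>2 * turning_point\<^sup>2 = chi"
    using c_pos by (simp add: turning_point_sq)
  finally have "0 < chi - c\<^sup>2 * x\<^sup>2 + comparison_freq\<^sup>2 * (x\<^sup>2 - 1)"
    by simp
  then have "0 < (chi - c\<^sup>2 * x\<^sup>2 + comparison_freq\<^sup>2 * (x\<^sup>2 - 1)) * h x"
    using pos[OF x] by simp
  moreover have "0 \<le> -2 * x * h' x"
    using x \<open>h' x \<le> 0\<close> by (intro mult_nonpos_nonpos) simp_all
  ultimately have "0 < -2 * x * h' x + (chi - c\<^sup>2 * x\<^sup>2 + comparison_freq\<^sup>2 * (x\<^sup>2 - 1)) * h x"
    by linarith
  also have "\<dots> = (x\<^sup>2 - 1) * (h'' x + comparison_freq\<^sup>2 * h x)"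
    using ode[of x] by (simp add: algebra_simps)
  finally show ?thesis
    using power2_minus_one_pos[OF x(1)] by (simp add: zero_less_mult_iff)
qed

lemma root_gap: "pi / 2 < comparison_freq * (x1 - turning_point)"
proof -
  obtain m where m: "turning_point < m" "m < x1" "h' m = 0"
    and decr: "\<And>x. m < x \<Longrightarrow> x \<le> x1 \<Longrightarrow> h' x < 0"
    using last_critical_point by blast
  have "pi / 2 < comparison_freq * (x1 - m)"
  proof (rule cosine_comparison_gap[OF comparison_freq_pos \<open>m < x1\<close> d1 d2 \<open>h' m = 0\<close> root])
    show "h' x1 \<le> 0"
      using decr[of x1] m by simp
    fix x assume "m < x" "x < x1"
    then show "h'' x + comparison_freq\<^sup>2 * h x > 0"
      using comparison_supersolution decr[of x] m turning_point_gt_1 by simp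
  qed
  also have "\<dots> < comparison_freq * (x1 - turning_point)"
    using comparison_freq_pos m by simp
  finally show ?thesis .
qed

lemma root_bounds:
  "x1 - sqrt chi / c > pi / (2 * c) \<and>
   sqrt ((x1\<^sup>2 - 1) / (x1\<^sup>2 - chi / c\<^sup>2)) < 2 / pi * c * (x1 - sqrt chi / c)"
proof -
  have gap: "x1 - turning_point > 0"
    using turning_point_less_root by simp
  have "pi / 2 < comparison_freq * (x1 - turning_point)"
    by (rule root_gap)
  also have "\<dots> < c * (x1 - turning_point)"
    using comparison_freq_less gap by simp
  finally have "pi / 2 < c * (x1 - turning_point)" .
  then have "pi / (2 * c) < x1 - turning_point"
    using c_pos by (simp add: field_simps)
  moreover have "sqrt ((x1\<^sup>2 - 1) / (x1\<^sup>2 - chi / c\<^sup>2)) = c / comparison_freq"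
    using c_pos comparison_freq_pos
    by (simp add: comparison_freq_def turning_point_sq real_sqrt_divide)
  moreover have "1 / comparison_freq < 2 / pi * (x1 - turning_point)"
    using root_gap comparison_freq_pos pi_gt_zero by (simp add: field_simps)
  then have "c * (1 / comparison_freq) < c * (2 / pi * (x1 - turning_point))"
    using c_pos by (rule mult_strict_left_mono)
  then have "c / comparison_freq < 2 / pi * c * (x1 - turning_point)"
    by (simp add: ac_simps)
  ultimately show ?thesis
    by (simp add: turning_point_def)
qed

end

lemma spheroidal_arc_sign_normalised:
  fixes f f' f'' :: "real \<Rightarrow> real"
  assumes "c > 0" "c\<^sup>2 < chi" "1 < x1" "f x1 = 0"
    and nonzero: "\<And>y. 1 < y \<Longrightarrow> y < x1 \<Longrightarrow> f y \<noteq> 0"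
    and d1: "\<And>x. (f has_real_derivative f' x) (at x)"
    and d2: "\<And>x. (f' has_real_derivative f'' x) (at x)"
    and ode: "\<And>x. (1 - x\<^sup>2) * f'' x - 2 * x * f' x + (chi - c\<^sup>2 * x\<^sup>2) * f x = 0"
  obtains s where "spheroidal_arc c chi x1 (\<lambda>t. s * f t) (\<lambda>t. s * f' t) (\<lambda>t. s * f'' t)"
proof -
  have "continuous_on {1<..<x1} f"
    using d1 by (meson DERIV_isCont continuous_at_imp_continuous_on)
  then obtain s where s: "\<And>y. y \<in> {1<..<x1} \<Longrightarrow> 0 < s * f y"
    by (rule continuous_on_connected_nonzero_sign) (use nonzero in auto)
  show thesis
  proof (rule that, unfold_locales)
    show "c > 0" "c\<^sup>2 < chi" "1 < x1" "s * f x1 = 0"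
      using assms by simp_all
    show "1 < y \<Longrightarrow> y < x1 \<Longrightarrow> 0 < s * f y" for y
      using s by simp
    show "((\<lambda>t. s * f t) has_real_derivative s * f' x) (at x)" for x
      using d1 by (rule DERIV_cmult)
    show "((\<lambda>t. s * f' t) has_real_derivative s * f'' x) (at x)" for x
      using d2 by (rule DERIV_cmult)
    show "(1 - x\<^sup>2) * (s * f'' x) - 2 * x * (s * f' x) + (chi - c\<^sup>2 * x\<^sup>2) * (s * f x) = 0" for x
      using arg_cong[OF ode[of x], of "(*) s"] by (simp add: algebra_simps)
  qed
qed

theorem theorem31:
  fixes c :: real and psi :: "nat \<Rightarrow> real \<Rightarrow> real" and lam :: "nat \<Rightarrow> complex"
    and chi :: "nat \<Rightarrow> real" and n :: nat and x1 :: real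
  assumes "c > 0"
    and "pswf_system c psi lam chi"
    and "chi n > c\<^sup>2"
    and "x1 > 1" and "psi n x1 = 0"
    and "\<forall>y. 1 < y \<and> y < x1 \<longrightarrow> psi n y \<noteq> 0"
  shows "x1 - sqrt (chi n) / c > pi / (2 * c) \<and>
         sqrt ((x1\<^sup>2 - 1) / (x1\<^sup>2 - chi n / c\<^sup>2)) < 2 / pi * c * (x1 - sqrt (chi n) / c)"
proof -
  have d1: "(psi n has_real_derivative deriv (psi n) x) (at x)"
    and d2: "(deriv (psi n) has_real_derivative deriv (deriv (psi n)) x) (at x)"
    and ode: "(1 - x\<^sup>2) * deriv (deriv (psi n)) x - 2 * x * deriv (psi n) x
      + (chi n - c\<^sup>2 * x\<^sup>2) * psi n x = 0" for x
    using assms(2) by (simp_all add: pswf_system_def DERIV_deriv_iff_real_differentiable)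
  obtain s where "spheroidal_arc c (chi n) x1 (\<lambda>t. s * psi n t)
      (\<lambda>t. s * deriv (psi n) t) (\<lambda>t. s * deriv (deriv (psi n)) t)"
    using spheroidal_arc_sign_normalised[OF assms(1,3,4,5) _ d1 d2 ode] assms(6) by blast
  then show ?thesis
    by (rule spheroidal_arc.root_bounds)
qed

end
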